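(* There is an absolute constant $C$ such that for every integer $k\ge2$, every set $S$ of $k$-sparse finite real sequences (each having at most $k$ nonzero coordinates, with arbitrary lengths and arbitrary real coordinates) has doubling dimension at most $Ck\log k$ under $d_{\mathrm{ERP}}$.
   Context: Edit Distance with Real Penalty (ERP): for finite real sequences $r,s$ (possibly of different lengths), let $m'$ be the length of the longer one. A gap insertion inserts a zero-valued coordinate at any position. For $p\ge m'$ let $R_p$ (resp. $S_p$) be the set of length-$p$ sequences obtainable from $r$ (resp. $s$) by gap insertions. Then $d_{\mathrm{ERP}}(r,s)=\min_{p\ge m',\ \tilde r\in R_p,\ \tilde s\in S_p}\|\tilde r-\tilde s\|_1$. The doubling constant $\lambda$ of a (pseudo)metric space is the smallest number such that every ball (centered in the space) can be covered by $\lambda$ balls of half the radius; the doubling dimension is $\mathrm{ddim}=\log_2\lambda$. *)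

theory Defs
  imports Complex_Main
begin

text \<open>A finite real sequence is a list of reals. A list t is obtainable from r by
gap insertions iff r is the subsequence of t at some index set I and every
coordinate of t outside I is zero.\<close>
definition gap_ext :: "real list \<Rightarrow> real list \<Rightarrow> bool" where
  "gap_ext r t \<longleftrightarrow> (\<exists>I. I \<subseteq> {0..<length t} \<and> nths t I = r \<and>
      (\<forall>i<length t. i \<notin> I \<longrightarrow> t ! i = 0))"

definition gap_exts :: "real list \<Rightarrow> nat \<Rightarrow> real list set" where
  "gap_exts r p = {t. length t = p \<and> gap_ext r t}"

definition l1_dist :: "real list \<Rightarrow> real list \<Rightarrow> real" where
  "l1_dist u v = (\<Sum>i<length u. \<bar>u ! i - v ! i\<bar>)"

definition d_ERP :: "real list \<Rightarrow> real list \<Rightarrow> real" where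
  "d_ERP r s = Inf {l1_dist r' s' | p r' s'.
      p \<ge> max (length r) (length s) \<and> r' \<in> gap_exts r p \<and> s' \<in> gap_exts s p}"

definition dball :: "('a \<Rightarrow> 'a \<Rightarrow> real) \<Rightarrow> 'a set \<Rightarrow> 'a \<Rightarrow> real \<Rightarrow> 'a set" where
  "dball d S x \<rho> = {y \<in> S. d x y \<le> \<rho>}"

definition doubling_const_le :: "('a \<Rightarrow> 'a \<Rightarrow> real) \<Rightarrow> 'a set \<Rightarrow> real \<Rightarrow> bool" where
  "doubling_const_le d S N \<longleftrightarrow> (\<forall>x\<in>S. \<forall>\<rho>>0. \<exists>T. T \<subseteq> S \<and> finite T \<and>
      real (card T) \<le> N \<and> dball d S x \<rho> \<subseteq> (\<Union>t\<in>T. dball d S t (\<rho>/2)))"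

text \<open>ddim = log2 of the doubling constant, so ddim \<le> D iff constant \<le> 2 powr D.\<close>
definition doubling_dim_le :: "('a \<Rightarrow> 'a \<Rightarrow> real) \<Rightarrow> 'a set \<Rightarrow> real \<Rightarrow> bool" where
  "doubling_dim_le d S D \<longleftrightarrow> doubling_const_le d S (2 powr D)"

definition sparse :: "nat \<Rightarrow> real list \<Rightarrow> bool" where
  "sparse k s \<longleftrightarrow> card {i. i < length s \<and> s ! i \<noteq> 0} \<le> k"

end

theory Submission
  imports Defs
begin

text \<open>Every value of a point y in the ball of radius \<rho> about x lies within 2\<rho> of zero or of
one of the at most k values of x. Recording each of the at most k nonzero values of y by such
an anchor and its offset rounded to a grid of mesh \<rho>/(2k) yields one of at most
(k+1)((k+1)(8k+1))^k keys. Points with equal keys have equally many nonzero values, pairwise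
within \<rho>/(2k) of each other; aligning them gives ERP distance at most \<rho>/2. Finally the number
of keys is at most k^(8k) = 2^O(k log k).\<close>

abbreviation nonzeros :: "real list \<Rightarrow> real list" where
  "nonzeros y \<equiv> filter (\<lambda>v. v \<noteq> 0) y"

lemma length_nonzeros_le_if_sparse: "sparse k s \<Longrightarrow> length (nonzeros s) \<le> k"
  unfolding sparse_def by (simp add: length_filter_conv_card)

lemma gap_ext_Nil: "gap_ext [] []"
  unfolding gap_ext_def by auto

lemma gap_ext_Cons: "gap_ext r t \<Longrightarrow> gap_ext (a # r) (a # t)"
proof -
  assume "gap_ext r t"
  then obtain I where I: "I \<subseteq> {0..<length t}" "nths t I = r"
      "\<forall>i<length t. i \<notin> I \<longrightarrow> t ! i = 0"
    unfolding gap_ext_def by blast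
  define J where "J = insert 0 (Suc ` I)"
  have J: "{j. Suc j \<in> J} = I" unfolding J_def by auto
  show ?thesis unfolding gap_ext_def
  proof (intro exI conjI allI impI)
    show "J \<subseteq> {0..<length (a # t)}" using I(1) unfolding J_def by auto
    show "nths (a # t) J = a # r" using I(2) J by (simp add: nths_Cons J_def)
    fix i assume "i < length (a # t)" "i \<notin> J"
    then show "(a # t) ! i = 0" using I(3) unfolding J_def by (cases i) auto
  qed
qed

lemma gap_ext_zero_Cons: "gap_ext r t \<Longrightarrow> gap_ext r (0 # t)"
proof -
  assume "gap_ext r t"
  then obtain I where I: "I \<subseteq> {0..<length t}" "nths t I = r"
      "\<forall>i<length t. i \<notin> I \<longrightarrow> t ! i = 0"
    unfolding gap_ext_def by blast
  have J: "{j. Suc j \<in> Suc ` I} = I" by auto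
  show ?thesis unfolding gap_ext_def
  proof (intro exI conjI allI impI)
    show "Suc ` I \<subseteq> {0..<length (0 # t)}" using I(1) by auto
    show "nths (0 # t) (Suc ` I) = r" using I(2) J by (simp add: nths_Cons)
    fix i assume "i < length (0 # t)" "i \<notin> Suc ` I"
    then show "(0 # t) ! i = 0" using I(3) by (cases i) auto
  qed
qed

lemma gap_ext_append_zeros: "gap_ext r (r @ replicate m 0)"
  unfolding gap_ext_def
  by (intro exI[of _ "{..<length r}"]) (auto simp: nth_append)

lemma gap_ext_length_le: "gap_ext r t \<Longrightarrow> length r \<le> length t"
proof -
  assume "gap_ext r t"
  then obtain I where "nths t I = r" unfolding gap_ext_def by blast
  moreover have "card {i. i < length t \<and> i \<in> I} \<le> card {..<length t}"
    by (rule card_mono) auto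
  ultimately show ?thesis by (metis length_nths card_lessThan)
qed

lemma gap_ext_values:
  assumes "gap_ext r t"
  shows "set r \<subseteq> set t" and "set t \<subseteq> insert 0 (set r)"
proof -
  from assms obtain I where I: "nths t I = r" "\<forall>i<length t. i \<notin> I \<longrightarrow> t ! i = 0"
    unfolding gap_ext_def by blast
  show "set r \<subseteq> set t" using set_nths_subset[of t I] I(1) by simp
  show "set t \<subseteq> insert 0 (set r)"
  proof
    fix v assume "v \<in> set t"
    then obtain i where i: "i < length t" "t ! i = v" by (auto simp: in_set_conv_nth)
    show "v \<in> insert 0 (set r)"
    proof (cases "i \<in> I")
      case True
      then have "v \<in> set (nths t I)" using i by (auto simp: set_nths)
      then show ?thesis using I(1) by simp
    qed (use I(2) i in auto)
  qed
qed

lemma l1_dist_Cons: "l1_dist (a # u) (b # v) = \<bar>a - b\<bar> + l1_dist u v"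
  unfolding l1_dist_def length_Cons sum.lessThan_Suc_shift by simp

lemma l1_dist_nonneg: "0 \<le> l1_dist u v"
  unfolding l1_dist_def by (auto intro: sum_nonneg)

lemma l1_dist_nth_le: "i < length u \<Longrightarrow> \<bar>u ! i - v ! i\<bar> \<le> l1_dist u v"
  unfolding l1_dist_def by (rule member_le_sum) auto

lemma l1_dist_le_if_nth_less:
  assumes "\<And>j. j < length u \<Longrightarrow> \<bar>u ! j - v ! j\<bar> < \<delta>"
  shows "l1_dist u v \<le> real (length u) * \<delta>"
proof -
  have "l1_dist u v \<le> real (card {..<length u}) * \<delta>"
    unfolding l1_dist_def by (rule sum_bounded_above) (use assms in \<open>auto intro: less_imp_le\<close>)
  then show ?thesis by simp
qed

text \<open>Zeros are matched against gaps, nonzero values against each other in order.\<close>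
lemma gap_ext_align_nonzeros:
  assumes "length (nonzeros y) = length (nonzeros y')"
  shows "\<exists>r s. gap_ext y r \<and> gap_ext y' s \<and> length r = length s \<and>
      l1_dist r s = l1_dist (nonzeros y) (nonzeros y')"
  using assms
proof (induction "length y + length y'" arbitrary: y y' rule: less_induct)
  case less
  consider (zero_left) y1 where "y = 0 # y1"
    | (zero_right) y1' where "y' = 0 # y1'"
    | (empty) "y = []" "y' = []"
    | (heads) a y1 b y1' where "y = a # y1" "y' = b # y1'" "a \<noteq> 0" "b \<noteq> 0"
    using less.prems by (cases y; cases y') (auto split: if_splits)
  then show ?case
  proof cases
    case zero_left
    obtain r s where "gap_ext y1 r" "gap_ext y' s" "length r = length s"
        "l1_dist r s = l1_dist (nonzeros y1) (nonzeros y')"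
      using less(1)[of y1 y'] less.prems zero_left by auto
    with zero_left show ?thesis
      by (intro exI[of _ "0 # r"] exI[of _ "0 # s"])
        (auto intro: gap_ext_Cons gap_ext_zero_Cons simp: l1_dist_Cons)
  next
    case zero_right
    obtain r s where "gap_ext y r" "gap_ext y1' s" "length r = length s"
        "l1_dist r s = l1_dist (nonzeros y) (nonzeros y1')"
      using less(1)[of y y1'] less.prems zero_right by auto
    with zero_right show ?thesis
      by (intro exI[of _ "0 # r"] exI[of _ "0 # s"])
        (auto intro: gap_ext_Cons gap_ext_zero_Cons simp: l1_dist_Cons)
  next
    case empty
    then show ?thesis
      by (intro exI[of _ "[]"] exI[of _ "[]"]) (simp add: gap_ext_Nil l1_dist_def)
  next
    case heads
    obtain r s where "gap_ext y1 r" "gap_ext y1' s" "length r = length s"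
        "l1_dist r s = l1_dist (nonzeros y1) (nonzeros y1')"
      using less(1)[of y1 y1'] less.prems heads by auto
    with heads show ?thesis
      by (intro exI[of _ "a # r"] exI[of _ "b # s"]) (auto intro: gap_ext_Cons simp: l1_dist_Cons)
  qed
qed

lemma d_ERP_le_l1_dist:
  assumes "r' \<in> gap_exts r p" "s' \<in> gap_exts s p"
  shows "d_ERP r s \<le> l1_dist r' s'"
proof -
  have "p \<ge> max (length r) (length s)"
    using assms by (auto simp: gap_exts_def dest!: gap_ext_length_le)
  with assms show ?thesis
    unfolding d_ERP_def by (intro cInf_lower bdd_belowI[of _ 0]) (auto simp: l1_dist_nonneg)
qed

lemma d_ERP_le_l1_dist_nonzeros:
  assumes "length (nonzeros y) = length (nonzeros y')"
  shows "d_ERP y y' \<le> l1_dist (nonzeros y) (nonzeros y')"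
proof -
  obtain r s where "gap_ext y r" "gap_ext y' s" "length r = length s"
      "l1_dist r s = l1_dist (nonzeros y) (nonzeros y')"
    using gap_ext_align_nonzeros[OF assms] by blast
  then show ?thesis
    using d_ERP_le_l1_dist[of r y "length r" s y'] by (simp add: gap_exts_def)
qed

lemma d_ERP_less_imp_witness:
  assumes "d_ERP r s < e"
  obtains p r' s' where "r' \<in> gap_exts r p" "s' \<in> gap_exts s p" "l1_dist r' s' < e"
proof -
  let ?p = "max (length r) (length s)"
  have "r @ replicate (?p - length r) 0 \<in> gap_exts r ?p"
       "s @ replicate (?p - length s) 0 \<in> gap_exts s ?p"
    by (auto simp: gap_exts_def gap_ext_append_zeros)
  then have "{l1_dist r' s' | p r' s'. p \<ge> max (length r) (length s) \<and>
      r' \<in> gap_exts r p \<and> s' \<in> gap_exts s p} \<noteq> {}" by blast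
  from cInf_lessD[OF this assms[unfolded d_ERP_def]] that show ?thesis by blast
qed

text \<open>At the position of v, the aligned extension of x carries either a value of x or a gap.\<close>
lemma d_ERP_less_imp_value_near:
  assumes "d_ERP x y < e" "v \<in> set y"
  shows "\<exists>c \<in> insert 0 (set x). \<bar>v - c\<bar> < e"
proof -
  obtain p r' s' where r': "r' \<in> gap_exts x p" and s': "s' \<in> gap_exts y p"
    and less: "l1_dist r' s' < e"
    using d_ERP_less_imp_witness[OF assms(1)] .
  have "v \<in> set s'" using s' assms(2) gap_ext_values(1) by (auto simp: gap_exts_def)
  then obtain i where i: "i < length r'" "s' ! i = v"
    using r' s' by (auto simp: gap_exts_def in_set_conv_nth)
  have "r' ! i \<in> insert 0 (set x)"
    using r' i(1) gap_ext_values(2) by (force simp: gap_exts_def)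
  moreover have "\<bar>v - r' ! i\<bar> < e"
    using l1_dist_nth_le[OF i(1), of s'] less i(2) by (simp add: abs_minus_commute)
  ultimately show ?thesis ..
qed

lemma ball_cover_by_fibres:
  assumes "B \<subseteq> S" "finite K" "key ` B \<subseteq> K"
    and close: "\<And>y y'. y \<in> B \<Longrightarrow> y' \<in> B \<Longrightarrow> key y = key y' \<Longrightarrow> d y y' \<le> r"
  shows "\<exists>T. T \<subseteq> S \<and> finite T \<and> card T \<le> card K \<and> B \<subseteq> (\<Union>t\<in>T. dball d S t r)"
proof -
  define rep where "rep \<kappa> = (SOME y. y \<in> B \<and> key y = \<kappa>)" for \<kappa>
  have rep: "rep (key y) \<in> B \<and> key (rep (key y)) = key y" if "y \<in> B" for y
    unfolding rep_def by (rule someI_ex) (use that in blast)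
  have fin: "finite (key ` B)" using assms(2,3) by (rule finite_subset[rotated])
  show ?thesis
  proof (intro exI conjI)
    show "rep ` key ` B \<subseteq> S" using rep assms(1) by blast
    show "finite (rep ` key ` B)" using fin by simp
    have "card (rep ` key ` B) \<le> card (key ` B)" using fin by (rule card_image_le)
    also have "\<dots> \<le> card K" using assms(2,3) by (rule card_mono)
    finally show "card (rep ` key ` B) \<le> card K" .
    show "B \<subseteq> (\<Union>t\<in>rep ` key ` B. dball d S t r)"
      using rep close assms(1) unfolding dball_def by blast
  qed
qed

lemma card_lists_length_le_bound:
  assumes "finite X" "X \<noteq> {}"
  shows "card {xs. set xs \<subseteq> X \<and> length xs \<le> n} \<le> (n + 1) * card X ^ n"
proof -
  have "card {xs. set xs \<subseteq> X \<and> length xs \<le> n} = (\<Sum>i\<le>n. card X ^ i)"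
    using assms(1) by (rule card_lists_length_le)
  also have "\<dots> \<le> (\<Sum>i\<le>n. card X ^ n)"
    using assms by (intro sum_mono power_increasing) (auto simp: Suc_le_eq card_gt_0_iff)
  finally show ?thesis by simp
qed

definition quant_key :: "(real \<Rightarrow> real) \<Rightarrow> real \<Rightarrow> real list \<Rightarrow> (real \<times> int) list" where
  "quant_key c \<delta> y = map (\<lambda>v. (c v, \<lfloor>(v - c v) / \<delta>\<rfloor>)) (nonzeros y)"

lemma floor_eq_imp_dist_less: "\<lfloor>u::real\<rfloor> = \<lfloor>w\<rfloor> \<Longrightarrow> \<bar>u - w\<bar> < 1"
  by linarith

lemma d_ERP_le_if_quant_key_eq:
  assumes "\<delta> > 0" "quant_key c \<delta> y = quant_key c \<delta> y'"
  shows "d_ERP y y' \<le> real (length (nonzeros y)) * \<delta>"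
proof -
  have len: "length (nonzeros y) = length (nonzeros y')"
    using map_eq_imp_length_eq assms(2) unfolding quant_key_def by blast
  have "\<bar>nonzeros y ! j - nonzeros y' ! j\<bar> < \<delta>" if j: "j < length (nonzeros y)" for j
  proof -
    let ?a = "nonzeros y ! j" and ?b = "nonzeros y' ! j"
    have "quant_key c \<delta> y ! j = quant_key c \<delta> y' ! j" using assms(2) by simp
    then have c: "c ?a = c ?b" and cell: "\<lfloor>(?a - c ?a) / \<delta>\<rfloor> = \<lfloor>(?b - c ?b) / \<delta>\<rfloor>"
      using j len by (auto simp: quant_key_def)
    have "(?a - c ?a) / \<delta> - (?b - c ?b) / \<delta> = (?a - ?b) / \<delta>"
      using c by (simp add: diff_divide_distrib)
    with floor_eq_imp_dist_less[OF cell] have "\<bar>(?a - ?b) / \<delta>\<bar> < 1" by simp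
    then show ?thesis using assms(1) by (simp add: abs_divide divide_less_eq)
  qed
  then have "l1_dist (nonzeros y) (nonzeros y') \<le> real (length (nonzeros y)) * \<delta>"
    by (rule l1_dist_le_if_nth_less)
  with d_ERP_le_l1_dist_nonzeros[OF len] show ?thesis by linarith
qed

lemma floor_mem_int_interval: "\<bar>u::real\<bar> < real m \<Longrightarrow> \<lfloor>u\<rfloor> \<in> {- int m..int m}"
  by (simp add: abs_less_iff) linarith

lemma quant_key_mem_lists:
  assumes "\<delta> > 0" "length (nonzeros y) \<le> k"
    and near: "\<And>v. v \<in> set y \<Longrightarrow> c v \<in> A \<and> \<bar>v - c v\<bar> < real m * \<delta>"
  shows "quant_key c \<delta> y \<in> {ks. set ks \<subseteq> A \<times> {- int m..int m} \<and> length ks \<le> k}"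
proof -
  have "\<lfloor>(v - c v) / \<delta>\<rfloor> \<in> {- int m..int m}" if "v \<in> set y" for v
    using near[OF that] assms(1) by (intro floor_mem_int_interval) (simp add: divide_less_eq)
  with near assms(2) show ?thesis by (auto simp: quant_key_def)
qed

lemma card_insert_zero_set_le_if_sparse:
  assumes "sparse k x"
  shows "card (insert 0 (set x)) \<le> k + 1"
proof -
  have "insert 0 (set x) = insert 0 (set (nonzeros x))" by auto
  then have "card (insert 0 (set x)) \<le> Suc (card (set (nonzeros x)))"
    by (simp add: card_insert_le_m1)
  also have "\<dots> \<le> Suc (length (nonzeros x))" using card_length[of "nonzeros x"] by simp
  finally show ?thesis using length_nonzeros_le_if_sparse[OF assms] by simp
qed

lemma cover_count_le_self_power:
  assumes k: "(k::nat) \<ge> 2"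
  shows "(k + 1) * ((k + 1) * (8 * k + 1)) ^ k \<le> k ^ (8 * k)"
proof -
  have "2 * k \<le> k * k" using k by simp
  then have "k + 1 \<le> k * k" using k by linarith
  then have k_plus_1: "k + 1 \<le> k ^ 2" by (simp only: power2_eq_square)
  have "(2::nat) ^ 4 \<le> k ^ 4" using k by (rule power_mono) simp
  then have "16 * k \<le> k ^ 4 * k" by simp
  then have eight_k_plus_1: "8 * k + 1 \<le> k ^ 5" using k by (simp add: numeral_eq_Suc)
  have "(k + 1) * (8 * k + 1) \<le> k ^ 7"
    using mult_le_mono[OF k_plus_1 eight_k_plus_1] by (simp add: power_add[symmetric])
  then have "(k + 1) * ((k + 1) * (8 * k + 1)) ^ k \<le> k ^ 2 * (k ^ 7) ^ k"
    using k_plus_1 by (intro mult_le_mono power_mono) auto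
  also have "\<dots> = k ^ (7 * k + 2)" by (simp only: power_add power_mult) (rule mult.commute)
  also have "\<dots> \<le> k ^ (8 * k)" using k by (intro power_increasing) auto
  finally show ?thesis .
qed

lemma sparse_d_ERP_ball_cover:
  assumes k: "k \<ge> 2" and sparse: "\<forall>s\<in>S. sparse k s" and "x \<in> S" and \<rho>: "\<rho> > 0"
  shows "\<exists>T. T \<subseteq> S \<and> finite T \<and> card T \<le> k ^ (8 * k) \<and>
      dball d_ERP S x \<rho> \<subseteq> (\<Union>t\<in>T. dball d_ERP S t (\<rho> / 2))"
proof -
  define A where "A = insert 0 (set x)"
  define \<delta> where "\<delta> = \<rho> / (2 * real k)"
  define anc where "anc v = (SOME c. c \<in> A \<and> \<bar>v - c\<bar> < 2 * \<rho>)" for v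
  define B where "B = dball d_ERP S x \<rho>"
  define X where "X = A \<times> {- int (4 * k)..int (4 * k)}"
  have \<delta>: "\<delta> > 0" "real (4 * k) * \<delta> = 2 * \<rho>" "real k * \<delta> = \<rho> / 2"
    using k \<rho> by (auto simp: \<delta>_def field_simps)
  have BS: "B \<subseteq> S" unfolding B_def dball_def by auto
  have anc: "anc v \<in> A \<and> \<bar>v - anc v\<bar> < real (4 * k) * \<delta>" if "y \<in> B" "v \<in> set y" for y v
  proof -
    have "d_ERP x y < 2 * \<rho>" using that(1) \<rho> unfolding B_def dball_def by auto
    from d_ERP_less_imp_value_near[OF this that(2)]
    have "\<exists>c. c \<in> A \<and> \<bar>v - c\<bar> < 2 * \<rho>" unfolding A_def by blast
    then show ?thesis unfolding anc_def \<delta>(2) by (rule someI_ex)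
  qed
  have keys: "quant_key anc \<delta> ` B \<subseteq> {ks. set ks \<subseteq> X \<and> length ks \<le> k}"
  proof (rule image_subsetI)
    fix y assume "y \<in> B"
    then have "length (nonzeros y) \<le> k" using BS sparse length_nonzeros_le_if_sparse by blast
    from quant_key_mem_lists[OF \<delta>(1) this anc[OF \<open>y \<in> B\<close>]]
    show "quant_key anc \<delta> y \<in> {ks. set ks \<subseteq> X \<and> length ks \<le> k}" unfolding X_def .
  qed
  have close: "d_ERP y y' \<le> \<rho> / 2"
    if "y \<in> B" "y' \<in> B" "quant_key anc \<delta> y = quant_key anc \<delta> y'" for y y'
  proof -
    have "d_ERP y y' \<le> real (length (nonzeros y)) * \<delta>"
      using d_ERP_le_if_quant_key_eq[OF \<delta>(1) that(3)] .
    also have "\<dots> \<le> real k * \<delta>"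
      using length_nonzeros_le_if_sparse sparse BS that(1) \<delta>(1)
      by (intro mult_right_mono) auto
    finally show ?thesis using \<delta>(3) by simp
  qed
  have finX: "finite X" and "X \<noteq> {}" unfolding X_def A_def by auto
  have "card X \<le> (k + 1) * (8 * k + 1)"
  proof -
    have "card A \<le> k + 1"
      unfolding A_def using card_insert_zero_set_le_if_sparse sparse \<open>x \<in> S\<close> by blast
    moreover have "card {- int (4 * k)..int (4 * k)} = 8 * k + 1" by (simp add: nat_int_add)
    ultimately show ?thesis unfolding X_def card_cartesian_product by (metis mult_le_mono1)
  qed
  define K where "K = {ks. set ks \<subseteq> X \<and> length ks \<le> k}"
  have "card K \<le> (k + 1) * ((k + 1) * (8 * k + 1)) ^ k"
    using \<open>card X \<le> _\<close> card_lists_length_le_bound[OF finX \<open>X \<noteq> {}\<close>, of k] unfolding K_def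
    by (meson le_trans mult_le_mono2 power_mono zero_le)
  also have "\<dots> \<le> k ^ (8 * k)" using k by (rule cover_count_le_self_power)
  finally have "card K \<le> k ^ (8 * k)" .
  moreover obtain T where "T \<subseteq> S" "finite T" "card T \<le> card K"
      "B \<subseteq> (\<Union>t\<in>T. dball d_ERP S t (\<rho> / 2))"
    using ball_cover_by_fibres[where d = d_ERP, OF BS _ keys close] finX
    unfolding K_def by (blast intro: finite_lists_length_le)
  ultimately show ?thesis unfolding B_def by (meson le_trans)
qed

lemma half_le_ln_2: "1 / 2 \<le> ln (2::real)"
  using ln_le_minus_one[of "1 / 2"] by (simp add: ln_div)

lemma self_power_le_two_powr:
  assumes k: "(k::nat) \<ge> 2"
  shows "real k ^ (8 * k) \<le> 2 powr (16 * real k * ln (real k))"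
proof -
  have "0 \<le> real k * ln (real k)" using k by simp
  then have le: "8 * (real k * ln (real k)) \<le> (16 * ln 2) * (real k * ln (real k))"
    using half_le_ln_2 by (intro mult_right_mono) auto
  have "real k ^ (8 * k) = real k powr real (8 * k)"
    using k by (intro powr_realpow[symmetric]) simp
  also have "\<dots> = exp (8 * (real k * ln (real k)))"
    using k by (simp add: powr_def)
  also have "\<dots> \<le> exp ((16 * ln 2) * (real k * ln (real k)))"
    using le by (rule exp_mono)
  also have "\<dots> = 2 powr (16 * real k * ln (real k))"
    by (simp add: powr_def mult_ac)
  finally show ?thesis .
qed

theorem mainTheorem11:
  shows "\<exists>C::real. \<forall>k::nat. k \<ge> 2 \<longrightarrow> (\<forall>S::real list set.
     (\<forall>s\<in>S. sparse k s) \<longrightarrow> doubling_dim_le d_ERP S (C * real k * ln (real k)))"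
proof (intro exI[of _ 16] allI impI)
  fix k :: nat and S :: "real list set"
  assume k: "k \<ge> 2" and sparse: "\<forall>s\<in>S. sparse k s"
  show "doubling_dim_le d_ERP S (16 * real k * ln (real k))"
    unfolding doubling_dim_le_def doubling_const_le_def
  proof (intro ballI allI impI)
    fix x \<rho> assume "x \<in> S" "(\<rho>::real) > 0"
    obtain T where "T \<subseteq> S" "finite T" and card: "card T \<le> k ^ (8 * k)"
        and "dball d_ERP S x \<rho> \<subseteq> (\<Union>t\<in>T. dball d_ERP S t (\<rho> / 2))"
      using sparse_d_ERP_ball_cover[OF k sparse \<open>x \<in> S\<close> \<open>\<rho> > 0\<close>] by blast
    moreover have "real (card T) \<le> 2 powr (16 * real k * ln (real k))"
    proof -
      have "real (card T) \<le> real (k ^ (8 * k))" using card by (rule of_nat_mono)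
      also have "\<dots> = real k ^ (8 * k)" by (rule of_nat_power)
      also have "\<dots> \<le> 2 powr (16 * real k * ln (real k))" using k by (rule self_power_le_two_powr)
      finally show ?thesis .
    qed
    ultimately show "\<exists>T. T \<subseteq> S \<and> finite T \<and>
        real (card T) \<le> 2 powr (16 * real k * ln (real k)) \<and>
        dball d_ERP S x \<rho> \<subseteq> (\<Union>t\<in>T. dball d_ERP S t (\<rho> / 2))"
      by blast
  qed
qed

end
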